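(* Let $\mathcal{A}_i\subseteq[K]$ for $i\in[M]$, $\mathcal{R}_a=\{i\in[M]:a\in\mathcal{A}_i\}$, and let $e_{i,a}\in\mathbb{R}^d$ be unit vectors. Let $\mathcal{C}$ be the set of $\pi=(\pi_{i,a})_{i\in[M],a\in\mathcal{A}_i}$ with $\pi_{i,a}\ge0$, $\sum_{a\in\mathcal{A}_i}\pi_{i,a}=1$ for all $i$, and $\mathrm{rank}(\{\pi_{i,a}e_{i,a}\}_{i\in\mathcal{R}_a})=\mathrm{rank}(\{e_{i,a}\}_{i\in\mathcal{R}_a})$ for all $a$ with $\mathcal{R}_a\neq\emptyset$. Define $F(\pi)=\sum_{a\in[K]}\log\mathrm{Det}\big(\sum_{j\in\mathcal{R}_a}\pi_{j,a}e_{j,a}e_{j,a}^\intercal\big)$, $G(\pi)=\sum_{i=1}^M\max_{a\in\mathcal{A}_i}e_{i,a}^\intercal\big(\sum_{j\in\mathcal{R}_a}\pi_{j,a}e_{j,a}e_{j,a}^\intercal\big)^\dagger e_{i,a}$, and $d_a=\mathrm{rank}(\{e_{i,a}\}_{i\in\mathcal{R}_a})$. For $\pi^*\in\mathcal{C}$ the following are equivalent: (1) $\pi^*$ maximizes $F$ over $\mathcal{C}$; (2) $\pi^*$ minimizes $G$ over $\mathcal{C}$; (3) $G(\pi^* )=\sum_{a\in[K]}d_a$.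
   Context: $A^\dagger$ denotes the Moore–Penrose pseudo-inverse. For a square matrix $A\in\mathbb{R}^{n\times n}$, the pseudo-determinant is $\mathrm{Det}(A)=\lim_{\epsilon\to0}\det(A+\epsilon I)/\epsilon^{n-\mathrm{rank}(A)}$ (the product of the nonzero eigenvalues). *)

theory Defs
  imports "HOL-Analysis.Analysis"
begin

definition outer :: "real^'d \<Rightarrow> real^'d^'d" where
  "outer v = (\<chi> r c. v $ r * v $ c)"

definition mp_pinv :: "real^'n^'m \<Rightarrow> real^'m^'n" where
  "mp_pinv A = (THE B. A ** B ** A = A \<and> B ** A ** B = B \<and>
                      transpose (A ** B) = A ** B \<and> transpose (B ** A) = B ** A)"

definition pdet :: "real^'n^'n \<Rightarrow> real" where
  "pdet A = Lim (at (0::real))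
     (\<lambda>\<epsilon>. det (A + \<epsilon> *\<^sub>R mat 1) / \<epsilon> ^ (CARD('n) - rank A))"

definition Rset :: "nat \<Rightarrow> (nat \<Rightarrow> nat set) \<Rightarrow> nat \<Rightarrow> nat set" where
  "Rset M A a = {i \<in> {1..M}. a \<in> A i}"

definition Vmat :: "nat \<Rightarrow> (nat \<Rightarrow> nat set) \<Rightarrow> (nat \<Rightarrow> nat \<Rightarrow> real^'d)
     \<Rightarrow> (nat \<Rightarrow> nat \<Rightarrow> real) \<Rightarrow> nat \<Rightarrow> real^'d^'d" where
  "Vmat M A e \<pi> a = (\<Sum>j\<in>Rset M A a. \<pi> j a *\<^sub>R outer (e j a))"

definition Cset :: "nat \<Rightarrow> nat \<Rightarrow> (nat \<Rightarrow> nat set) \<Rightarrow> (nat \<Rightarrow> nat \<Rightarrow> real^'d)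
     \<Rightarrow> (nat \<Rightarrow> nat \<Rightarrow> real) set" where
  "Cset M K A e = {\<pi>.
     (\<forall>i\<in>{1..M}. (\<forall>a\<in>A i. \<pi> i a \<ge> 0) \<and> (\<Sum>a\<in>A i. \<pi> i a) = 1) \<and>
     (\<forall>a\<in>{1..K}. Rset M A a \<noteq> {} \<longrightarrow>
        dim ((\<lambda>i. \<pi> i a *\<^sub>R e i a) ` Rset M A a) = dim ((\<lambda>i. e i a) ` Rset M A a))}"

definition Fobj :: "nat \<Rightarrow> nat \<Rightarrow> (nat \<Rightarrow> nat set) \<Rightarrow> (nat \<Rightarrow> nat \<Rightarrow> real^'d)
     \<Rightarrow> (nat \<Rightarrow> nat \<Rightarrow> real) \<Rightarrow> real" where
  "Fobj M K A e \<pi> = (\<Sum>a\<in>{1..K}. ln (pdet (Vmat M A e \<pi> a)))"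

definition Gobj :: "nat \<Rightarrow> (nat \<Rightarrow> nat set) \<Rightarrow> (nat \<Rightarrow> nat \<Rightarrow> real^'d)
     \<Rightarrow> (nat \<Rightarrow> nat \<Rightarrow> real) \<Rightarrow> real" where
  "Gobj M A e \<pi> = (\<Sum>i\<in>{1..M}.
      Max ((\<lambda>a. e i a \<bullet> (mp_pinv (Vmat M A e \<pi> a) *v e i a)) ` A i))"

definition dval :: "nat \<Rightarrow> (nat \<Rightarrow> nat set) \<Rightarrow> (nat \<Rightarrow> nat \<Rightarrow> real^'d) \<Rightarrow> nat \<Rightarrow> nat" where
  "dval M A e a = dim ((\<lambda>i. e i a) ` Rset M A a)"

end

theory Submission
  imports Defs
begin

(* For pi in C every design matrix V_a(pi) is positive semidefinite with range exactly
   W_a = span {e_{i,a} | i in R_a}, a space of dimension d_a.  With P_a the orthogonal projection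
   onto W_a, the matrix V_a + I - P_a is positive definite, its determinant is Det V_a and its
   inverse is V_a^+ + I - P_a.  Hence log Det is concave on C, with partial derivative in pi_{i,a}
   the leverage g_{i,a} = e_{i,a}^T V_a^+ e_{i,a}, and
   sum_{i,a} pi_{i,a} g_{i,a} = sum_a tr (V_a^+ V_a) = sum_a d_a.
   As a maximum dominates every average, G >= sum_a d_a on C.  If G(pis) = sum_a d_a, concavity
   gives F(pi) <= F(pis) + sum_{i,a} pi_{i,a} g_{i,a}(pis) - sum_a d_a <= F(pis).  If
   G(pis) > sum_a d_a, some row i has max_a g_{i,a} > sum_a pis_{i,a} g_{i,a}, and shifting the
   weight of row i towards a maximising a increases F to first order.  Finally F attains its
   maximum on C by compactness, so the minimum of G is sum_a d_a. *)

section \<open>Matrix algebra\<close>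

lemma matrix_add_rdistrib: "((A :: real^'n^'m) + B) ** C = A ** C + B ** C"
  by (simp add: matrix_matrix_mult_def vec_eq_iff sum.distrib algebra_simps)

lemma matrix_diff_ldistrib: "(A :: real^'n^'m) ** (B - C) = A ** B - A ** C"
  by (simp add: matrix_matrix_mult_def vec_eq_iff sum_subtractf algebra_simps)

lemma matrix_mult_sum_right: "(Q :: real^'n^'m) ** (\<Sum>j\<in>J. X j) = (\<Sum>j\<in>J. Q ** X j)"
  by (induction J rule: infinite_finite_induct) (simp_all add: matrix_add_ldistrib)

lemma matrix_vector_mult_sum: "(\<Sum>b\<in>B. M b) *v x = (\<Sum>b\<in>B. M b *v x)"
  by (induction B rule: infinite_finite_induct) (auto simp: matrix_vector_mult_add_rdistrib)

lemma outer_mult_vec: "outer v *v x = (v \<bullet> x) *\<^sub>R v"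
  by (simp add: outer_def matrix_vector_mult_def inner_vec_def vec_eq_iff sum_distrib_left mult_ac)

lemma trace_sum: "trace (\<Sum>b\<in>B. M b) = (\<Sum>b\<in>B. trace (M b))"
  unfolding trace_def by (simp add: sum_component) (rule sum.swap)

lemma trace_scaleR: "trace (c *\<^sub>R M) = c * trace M"
  by (simp add: trace_def sum_distrib_left)

lemma trace_mult_outer: "trace (M ** outer v) = v \<bullet> (M *v v)"
  by (simp add: trace_def matrix_matrix_mult_def outer_def inner_vec_def matrix_vector_mult_def
      sum_distrib_left mult_ac)

lemma symmetric_matrix_inner_commute:
  fixes S :: "real^'n^'n"
  assumes "transpose S = S"
  shows "x \<bullet> (S *v y) = (S *v x) \<bullet> y"
  by (metis assms dot_lmul_matrix vector_transpose_matrix)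

lemma continuous_on_det:
  fixes F :: "'a::topological_space \<Rightarrow> real^'n^'n"
  assumes "\<And>i j. continuous_on S (\<lambda>x. F x $ i $ j)"
  shows "continuous_on S (\<lambda>x. det (F x))"
  unfolding det_def by (intro continuous_intros assms)

lemma mp_pinv_eqI:
  fixes A :: "real^'n^'m"
  assumes "A ** X ** A = A" "X ** A ** X = X" "transpose (A ** X) = A ** X"
    "transpose (X ** A) = X ** A"
  shows "mp_pinv A = X"
  unfolding mp_pinv_def
proof (rule the_equality)
  show "A ** X ** A = A \<and> X ** A ** X = X \<and> transpose (A ** X) = A ** X \<and> transpose (X ** A) = X ** A"
    using assms by blast
  fix Y assume "A ** Y ** A = A \<and> Y ** A ** Y = Y \<and> transpose (A ** Y) = A ** Y
    \<and> transpose (Y ** A) = Y ** A"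
  then have y1: "A ** Y ** A = A" and y2: "Y ** A ** Y = Y" and y3: "transpose (A ** Y) = A ** Y"
    and y4: "transpose (Y ** A) = Y ** A" by auto
  have AY: "A ** Y = A ** X"
  proof -
    have "A ** Y = transpose (A ** X) ** transpose (A ** Y)"
      using assms(1,3) y3 by (metis matrix_mul_assoc)
    also have "\<dots> = transpose (A ** Y ** A ** X)" by (simp add: matrix_transpose_mul matrix_mul_assoc)
    finally show ?thesis using y1 assms(3) by simp
  qed
  have YA: "Y ** A = X ** A"
  proof -
    have "Y ** A = transpose (Y ** A) ** transpose (X ** A)"
      using assms(1,4) y4 by (metis matrix_mul_assoc)
    also have "\<dots> = transpose (X ** A ** Y ** A)" by (simp add: matrix_transpose_mul matrix_mul_assoc)
    also have "\<dots> = transpose (X ** A)" using y1 by (metis matrix_mul_assoc)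
    finally show ?thesis using assms(4) by simp
  qed
  have "Y = X ** A ** Y" using y2 YA by simp
  also have "\<dots> = X" using AY assms(2) by (metis matrix_mul_assoc)
  finally show "Y = X" .
qed

section \<open>Matrices diagonal in an orthonormal basis\<close>

definition orthonormal_basis :: "(real^'n) set \<Rightarrow> bool" where
  "orthonormal_basis B \<longleftrightarrow> pairwise orthogonal B \<and> (\<forall>b\<in>B. norm b = 1) \<and> span B = UNIV"

definition onb_diag :: "(real^'n) set \<Rightarrow> (real^'n \<Rightarrow> real) \<Rightarrow> real^'n^'n" where
  "onb_diag B f = (\<Sum>b\<in>B. f b *\<^sub>R outer b)"

lemma orthonormal_basis_independent: "orthonormal_basis B \<Longrightarrow> independent B"
  unfolding orthonormal_basis_def by (metis norm_zero pairwise_orthogonal_independent zero_neq_one)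

lemma orthonormal_basis_finite: "orthonormal_basis B \<Longrightarrow> finite B"
  using orthonormal_basis_independent independent_imp_finite by blast

lemma orthonormal_basis_card:
  fixes B :: "(real^'n) set"
  assumes "orthonormal_basis B"
  shows "card B = CARD('n)"
proof -
  have "card B = dim B"
    using orthonormal_basis_independent[OF assms] by (simp add: dim_eq_card_independent)
  also have "\<dots> = dim (UNIV :: (real^'n) set)"
    using assms by (metis dim_span orthonormal_basis_def)
  finally show ?thesis by simp
qed

lemma orthonormal_basis_inner:
  "orthonormal_basis B \<Longrightarrow> b \<in> B \<Longrightarrow> c \<in> B \<Longrightarrow> b \<bullet> c = (if b = c then 1 else 0)"
  unfolding orthonormal_basis_def pairwise_def orthogonal_def
  by (metis norm_eq_1 power2_norm_eq_inner)

lemma orthonormal_basis_expansion: "orthonormal_basis B \<Longrightarrow> (\<Sum>b\<in>B. (b \<bullet> x) *\<^sub>R b) = x"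
  using orthonormal_basis_expand[of B x] orthonormal_basis_finite[of B]
  unfolding orthonormal_basis_def by (simp add: inner_commute)

lemma orthonormal_basis_vector_eqI:
  assumes "orthonormal_basis B" and "\<And>b. b \<in> B \<Longrightarrow> b \<bullet> x = b \<bullet> y"
  shows "x = y"
  using orthonormal_basis_expansion[OF assms(1), of x] orthonormal_basis_expansion[OF assms(1), of y]
  by (metis (no_types, lifting) assms(2) sum.cong)

lemma onb_diag_mult_vec: "onb_diag B f *v x = (\<Sum>b\<in>B. (f b * (b \<bullet> x)) *\<^sub>R b)"
  unfolding onb_diag_def matrix_vector_mult_sum
  by (rule sum.cong) (simp_all add: vec_eq_iff matrix_vector_mult_def outer_def inner_vec_def
      sum_distrib_left mult_ac)

lemma onb_diag_quadratic_form: "x \<bullet> (onb_diag B f *v x) = (\<Sum>b\<in>B. f b * (b \<bullet> x)\<^sup>2)"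
  unfolding onb_diag_mult_vec
  by (simp add: inner_sum_right power2_eq_square inner_commute mult_ac)

lemma inner_onb_diag_mult_vec:
  assumes B: "orthonormal_basis B" and c: "c \<in> B"
  shows "c \<bullet> (onb_diag B f *v x) = f c * (c \<bullet> x)"
proof -
  have "c \<bullet> (onb_diag B f *v x) = (\<Sum>b\<in>B. f b * (b \<bullet> x) * (c \<bullet> b))"
    by (simp add: onb_diag_mult_vec inner_sum_right)
  also have "\<dots> = (\<Sum>b\<in>B. if b = c then f c * (c \<bullet> x) else 0)"
    by (rule sum.cong) (auto simp: orthonormal_basis_inner[OF B c])
  finally show ?thesis using c orthonormal_basis_finite[OF B] by (simp add: sum.delta')
qed

lemma onb_diag_eigenvector:
  assumes B: "orthonormal_basis B" and c: "c \<in> B"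
  shows "onb_diag B f *v c = f c *\<^sub>R c"
  by (rule orthonormal_basis_vector_eqI[OF B])
    (simp add: inner_onb_diag_mult_vec[OF B] orthonormal_basis_inner[OF B _ c])

lemma onb_diag_mult:
  assumes B: "orthonormal_basis B"
  shows "onb_diag B f ** onb_diag B g = onb_diag B (\<lambda>b. f b * g b)"
  unfolding matrix_eq
  by (intro allI orthonormal_basis_vector_eqI[OF B])
    (simp add: matrix_vector_mul_assoc[symmetric] inner_onb_diag_mult_vec[OF B])

lemma onb_diag_one: "orthonormal_basis B \<Longrightarrow> onb_diag B (\<lambda>_. 1) = mat 1"
  unfolding matrix_eq by (simp add: onb_diag_mult_vec orthonormal_basis_expansion)

lemma onb_diag_add: "onb_diag B f + onb_diag B g = onb_diag B (\<lambda>b. f b + g b)"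
  unfolding onb_diag_def by (simp add: sum.distrib scaleR_add_left)

lemma onb_diag_diff: "onb_diag B f - onb_diag B g = onb_diag B (\<lambda>b. f b - g b)"
  unfolding onb_diag_def by (simp add: sum_subtractf scaleR_diff_left)

lemma onb_diag_scaleR: "c *\<^sub>R onb_diag B f = onb_diag B (\<lambda>b. c * f b)"
  unfolding onb_diag_def by (simp add: scaleR_sum_right)

lemma onb_diag_cong: "(\<And>b. b \<in> B \<Longrightarrow> f b = g b) \<Longrightarrow> onb_diag B f = onb_diag B g"
  unfolding onb_diag_def by (simp cong: sum.cong)

lemma transpose_onb_diag: "transpose (onb_diag B f) = onb_diag B f"
  by (simp add: onb_diag_def transpose_def outer_def sum_component vec_eq_iff mult_ac)

lemma trace_onb_diag:
  assumes B: "orthonormal_basis B"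
  shows "trace (onb_diag B f) = sum f B"
proof -
  have "trace (onb_diag B f) = (\<Sum>b\<in>B. f b * (b \<bullet> b))"
    unfolding onb_diag_def trace_sum trace_scaleR by (simp add: trace_def outer_def inner_vec_def)
  then show ?thesis by (simp add: orthonormal_basis_inner[OF B])
qed

lemma onb_diag_pos_definite:
  assumes B: "orthonormal_basis B" and \<mu>: "\<And>b. b \<in> B \<Longrightarrow> 0 < \<mu> b" and x: "x \<noteq> 0"
  shows "0 < x \<bullet> (onb_diag B \<mu> *v x)"
proof -
  obtain b where b: "b \<in> B" "b \<bullet> x \<noteq> 0"
    using x orthonormal_basis_vector_eqI[OF B, of x 0] by auto
  have "0 < \<mu> b * (b \<bullet> x)\<^sup>2" using \<mu>[OF b(1)] b(2) by simp
  also have "\<dots> \<le> (\<Sum>b\<in>B. \<mu> b * (b \<bullet> x)\<^sup>2)"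
    using orthonormal_basis_finite[OF B] b(1) \<mu>[THEN less_imp_le] by (intro member_le_sum) auto
  finally show ?thesis unfolding onb_diag_quadratic_form .
qed

lemma det_onb_diag:
  fixes B :: "(real^'n) set"
  assumes B: "orthonormal_basis B"
  shows "det (onb_diag B f) = prod f B"
proof -
  have "card (UNIV :: 'n set) = card B" using orthonormal_basis_card[OF B] by simp
  then obtain g :: "'n \<Rightarrow> real^'n" where g: "bij_betw g UNIV B"
    using finite_same_card_bij[OF finite_class.finite_UNIV orthonormal_basis_finite[OF B]] by blast
  have g_in: "g i \<in> B" and g_eq: "g i = g j \<longleftrightarrow> i = j" for i j
    using g by (auto simp: bij_betw_def inj_def)
  define U :: "real^'n^'n" where "U = (\<chi> r j. g j $ r)"
  define D :: "real^'n^'n" where "D = (\<chi> i j. if i = j then f (g i) else 0)"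
  have "(U ** D ** transpose U) $ r $ c = (\<Sum>k\<in>UNIV. f (g k) * (g k $ r * g k $ c))" for r c
    by (simp add: matrix_matrix_mult_def U_def D_def transpose_def if_distrib if_distribR
        sum.delta' mult_ac cong: if_cong)
  also have "\<dots> r c = onb_diag B f $ r $ c" for r c
    using sum.reindex_bij_betw[OF g, of "\<lambda>b. f b * (b $ r * b $ c)"]
    by (simp add: onb_diag_def outer_def sum_component)
  finally have conj: "onb_diag B f = U ** D ** transpose U" by (simp add: vec_eq_iff)
  have "(transpose U ** U) $ i $ j = g i \<bullet> g j" for i j
    by (simp add: matrix_matrix_mult_def U_def transpose_def inner_vec_def)
  also have "g i \<bullet> g j = mat 1 $ i $ j" for i j
    using orthonormal_basis_inner[OF B g_in g_in] g_eq by (simp add: mat_def)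
  finally have "transpose U ** U = mat 1" by (simp add: vec_eq_iff)
  then have det_U: "det U * det U = 1" using arg_cong[of _ _ det] by (metis det_I det_mul det_transpose)
  have "det D = (\<Prod>i\<in>UNIV. f (g i))" by (subst det_diagonal) (auto simp: D_def)
  also have "\<dots> = prod f B" using prod.reindex_bij_betw[OF g, of f] by simp
  finally have "det D = prod f B" .
  then show ?thesis using det_U unfolding conj det_mul det_transpose
    by (metis mult.commute mult.left_commute mult_1)
qed

lemma range_onb_diag:
  assumes B: "orthonormal_basis B"
  shows "range ((*v) (onb_diag B l)) = span {b\<in>B. l b \<noteq> 0}"
proof
  show "range ((*v) (onb_diag B l)) \<subseteq> span {b\<in>B. l b \<noteq> 0}"
  proof clarify
    fix x
    have "onb_diag B l *v x = (\<Sum>b\<in>{b\<in>B. l b \<noteq> 0}. (l b * (b \<bullet> x)) *\<^sub>R b)"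
      unfolding onb_diag_mult_vec using orthonormal_basis_finite[OF B]
      by (intro sum.mono_neutral_cong_right) auto
    also have "\<dots> \<in> span {b\<in>B. l b \<noteq> 0}"
      by (intro span_sum span_scale span_base) simp
    finally show "onb_diag B l *v x \<in> span {b\<in>B. l b \<noteq> 0}" .
  qed
  show "span {b\<in>B. l b \<noteq> 0} \<subseteq> range ((*v) (onb_diag B l))"
  proof (rule span_minimal)
    show "subspace (range ((*v) (onb_diag B l)))"
      by (rule linear_subspace_image[OF matrix_vector_mul_linear subspace_UNIV])
    have "onb_diag B l *v (inverse (l b) *\<^sub>R b) = b" if "b \<in> B" "l b \<noteq> 0" for b
      using that by (simp add: matrix_vector_mult_scaleR onb_diag_eigenvector[OF B])
    then show "{b\<in>B. l b \<noteq> 0} \<subseteq> range ((*v) (onb_diag B l))"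
      by clarsimp (metis rangeI)
  qed
qed

lemma rank_onb_diag:
  assumes B: "orthonormal_basis B"
  shows "rank (onb_diag B l) = card {b\<in>B. l b \<noteq> 0}"
proof -
  have "independent {b\<in>B. l b \<noteq> 0}"
    by (rule independent_mono[OF orthonormal_basis_independent[OF B]]) auto
  then show ?thesis
    by (simp add: rank_dim_range range_onb_diag[OF B] dim_eq_card_independent)
qed

lemma pdet_onb_diag:
  fixes B :: "(real^'n) set"
  assumes B: "orthonormal_basis B"
  shows "pdet (onb_diag B l) = prod l {b\<in>B. l b \<noteq> 0}"
proof -
  define S where "S = {b\<in>B. l b \<noteq> 0}"
  have fin: "finite B" and SB: "S \<subseteq> B"
    using orthonormal_basis_finite[OF B] by (auto simp: S_def)
  have card: "card (B - S) = CARD('n) - rank (onb_diag B l)"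
    using rank_onb_diag[OF B, of l] orthonormal_basis_card[OF B] card_Diff_subset[OF finite_subset[OF SB fin] SB]
    by (simp add: S_def)
  have "det (onb_diag B l + \<epsilon> *\<^sub>R mat 1) = (\<Prod>b\<in>B. l b + \<epsilon>)" for \<epsilon>
    unfolding onb_diag_one[OF B, symmetric] onb_diag_scaleR onb_diag_add det_onb_diag[OF B] by simp
  also have "(\<Prod>b\<in>B. l b + \<epsilon>) = (\<Prod>b\<in>S. l b + \<epsilon>) * \<epsilon> ^ card (B - S)" for \<epsilon>
    using prod.subset_diff[OF SB fin, of "\<lambda>b. l b + \<epsilon>"] by (simp add: S_def mult.commute)
  finally have eq: "det (onb_diag B l + \<epsilon> *\<^sub>R mat 1) / \<epsilon> ^ (CARD('n) - rank (onb_diag B l))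
      = (\<Prod>b\<in>S. l b + \<epsilon>)" if "\<epsilon> \<noteq> 0" for \<epsilon>
    using that by (simp add: card)
  have "((\<lambda>\<epsilon>. \<Prod>b\<in>S. l b + \<epsilon>) \<longlongrightarrow> (\<Prod>b\<in>S. l b + 0)) (at 0)"
    by (intro tendsto_intros)
  then have "((\<lambda>\<epsilon>. det (onb_diag B l + \<epsilon> *\<^sub>R mat 1) / \<epsilon> ^ (CARD('n) - rank (onb_diag B l)))
      \<longlongrightarrow> prod l S) (at 0)"
    by (simp add: tendsto_cong[OF eventually_mono[OF eventually_neq_at_within[of 0 0 UNIV] eq]])
  then show ?thesis unfolding pdet_def S_def by (rule tendsto_Lim[rotated]) simp
qed

lemma mp_pinv_onb_diag:
  assumes B: "orthonormal_basis B"
  shows "mp_pinv (onb_diag B l) = onb_diag B (\<lambda>b. inverse (l b))"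
proof (rule mp_pinv_eqI)
  have "l b * inverse (l b) * l b = l b" and "inverse (l b) * l b * inverse (l b) = inverse (l b)" for b
    by (cases "l b = 0"; simp)+
  then show "onb_diag B l ** onb_diag B (\<lambda>b. inverse (l b)) ** onb_diag B l = onb_diag B l"
    and "onb_diag B (\<lambda>b. inverse (l b)) ** onb_diag B l ** onb_diag B (\<lambda>b. inverse (l b))
      = onb_diag B (\<lambda>b. inverse (l b))"
    unfolding onb_diag_mult[OF B] by presburger+
  show "transpose (onb_diag B l ** onb_diag B (\<lambda>b. inverse (l b))) = onb_diag B l ** onb_diag B (\<lambda>b. inverse (l b))"
    "transpose (onb_diag B (\<lambda>b. inverse (l b)) ** onb_diag B l) = onb_diag B (\<lambda>b. inverse (l b)) ** onb_diag B l"
    unfolding onb_diag_mult[OF B] by (rule transpose_onb_diag)+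
qed

section \<open>The spectral theorem for symmetric matrices\<close>

lemma nonpos_if_linear_le_quadratic:
  fixes a c :: real
  assumes "\<And>t. 0 < t \<Longrightarrow> 2 * t * a \<le> t\<^sup>2 * c"
  shows "a \<le> 0"
proof (rule ccontr)
  assume "\<not> a \<le> 0"
  define t where "t = a / (\<bar>c\<bar> + 1)"
  have "0 < a" "0 < t" using \<open>\<not> a \<le> 0\<close> by (simp_all add: t_def)
  then have "2 * a \<le> t * c" using assms[of t] by (simp add: power2_eq_square mult.assoc)
  also have "\<dots> \<le> t * \<bar>c\<bar>" using \<open>0 < t\<close> by (simp add: mult_left_mono)
  also have "\<dots> < a" using \<open>0 < a\<close> by (simp add: t_def divide_less_eq mult_strict_left_mono)
  finally show False using \<open>0 < a\<close> by simp
qed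

text \<open>A maximiser of the Rayleigh quotient is an eigenvector: otherwise moving it towards
  \<open>w = S *v v - \<rho> *\<^sub>R v\<close> would increase the quotient to first order.\<close>

lemma symmetric_matrix_rayleigh_maximiser:
  fixes S :: "real^'n^'n"
  assumes sym: "transpose S = S" and U: "subspace U" and inv: "\<And>x. x \<in> U \<Longrightarrow> S *v x \<in> U"
    and v: "v \<in> U" "norm v = 1"
    and v_max: "\<And>y. y \<in> U \<Longrightarrow> norm y = 1 \<Longrightarrow> y \<bullet> (S *v y) \<le> v \<bullet> (S *v v)"
  shows "S *v v = (v \<bullet> (S *v v)) *\<^sub>R v"
proof -
  define q where "q x = x \<bullet> (S *v x)" for x
  define \<rho> where "\<rho> = q v"
  define w where "w = S *v v - \<rho> *\<^sub>R v"
  have vv: "v \<bullet> v = 1" using v by (simp add: norm_eq_1)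
  have wU: "w \<in> U" unfolding w_def using inv v U by (simp add: subspace_diff subspace_scale)
  have wv: "w \<bullet> v = 0" "v \<bullet> w = 0"
    by (simp_all add: w_def inner_diff_left inner_diff_right vv \<rho>_def q_def inner_commute)
  have "w \<bullet> w = w \<bullet> (S *v v - \<rho> *\<^sub>R v)" by (simp only: w_def)
  then have wSv: "w \<bullet> (S *v v) = w \<bullet> w" using wv by (simp add: inner_diff_right)
  have vSw: "v \<bullet> (S *v w) = w \<bullet> w"
    using symmetric_matrix_inner_commute[OF sym, of v w] wSv by (simp add: inner_commute)
  have "2 * t * (w \<bullet> w) \<le> t\<^sup>2 * (\<rho> * (w \<bullet> w) - q w)" for t
  proof -
    define z where "z = v + t *\<^sub>R w"
    have zz: "z \<bullet> z = 1 + t\<^sup>2 * (w \<bullet> w)"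
      by (simp add: z_def inner_add_left inner_add_right vv wv power2_eq_square)
    then have "z \<noteq> 0" by (metis add_pos_nonneg inner_zero_left mult_nonneg_nonneg
          zero_le_power2 inner_ge_zero less_numeral_extra(1,3))
    moreover have "z \<in> U" using v wU U by (simp add: z_def subspace_add subspace_scale)
    ultimately have "(1 / norm z) *\<^sub>R z \<in> U" "norm ((1 / norm z) *\<^sub>R z) = 1"
      using U by (simp_all add: subspace_scale)
    then have "q ((1 / norm z) *\<^sub>R z) \<le> \<rho>" unfolding q_def \<rho>_def by (rule v_max)
    moreover have "q ((1 / norm z) *\<^sub>R z) = q z / (z \<bullet> z)"
      by (simp add: q_def matrix_vector_mult_scaleR power2_norm_eq_inner[symmetric] power2_eq_square)
    ultimately have "q z \<le> \<rho> * (z \<bullet> z)"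
      using \<open>z \<noteq> 0\<close> by (simp add: divide_le_eq mult.commute)
    moreover have "q z = \<rho> + 2 * t * (w \<bullet> w) + t\<^sup>2 * q w"
      by (simp add: z_def q_def \<rho>_def matrix_vector_right_distrib inner_add_left inner_add_right
          matrix_vector_mult_scaleR wSv vSw power2_eq_square algebra_simps)
    ultimately show ?thesis unfolding zz by (simp add: algebra_simps)
  qed
  then have "w \<bullet> w \<le> 0" by (intro nonpos_if_linear_le_quadratic)
  then have "w = 0" by (metis inner_ge_zero inner_eq_zero_iff order_antisym)
  then show ?thesis by (simp add: w_def \<rho>_def q_def)
qed

lemma symmetric_matrix_eigenvector_in_invariant_subspace:
  fixes S :: "real^'n^'n"
  assumes sym: "transpose S = S" and U: "subspace U" and inv: "\<And>x. x \<in> U \<Longrightarrow> S *v x \<in> U"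
    and nontriv: "U \<noteq> {0}"
  obtains v where "v \<in> U" "norm v = 1" "S *v v = (v \<bullet> (S *v v)) *\<^sub>R v"
proof -
  define T where "T = U \<inter> sphere 0 1"
  obtain u where "u \<in> U" "u \<noteq> 0" using nontriv U subspace_0 by blast
  then have "(1 / norm u) *\<^sub>R u \<in> T" using U by (simp add: T_def subspace_scale)
  then have "T \<noteq> {}" by blast
  moreover have "compact T" unfolding T_def
    by (intro closed_Int_compact closed_subspace U compact_sphere)
  moreover have "continuous_on T (\<lambda>x. x \<bullet> (S *v x))"
    by (intro continuous_on_inner continuous_on_id matrix_vector_mult_linear_continuous_on)
  ultimately obtain v where "v \<in> T" and max: "\<And>y. y \<in> T \<Longrightarrow> y \<bullet> (S *v y) \<le> v \<bullet> (S *v v)"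
    by (metis continuous_attains_sup)
  then have v: "v \<in> U" "norm v = 1" by (auto simp: T_def)
  have v_max: "y \<bullet> (S *v y) \<le> v \<bullet> (S *v v)" if "y \<in> U" "norm y = 1" for y
    using that max by (simp add: T_def)
  show thesis by (rule that[OF v symmetric_matrix_rayleigh_maximiser[OF sym U inv v v_max]])
qed

lemma symmetric_matrix_eigenvector_orthogonal:
  fixes S :: "real^'n^'n"
  assumes "transpose S = S" and "S *v v = c *\<^sub>R v" and "x \<bullet> v = 0"
  shows "(S *v x) \<bullet> v = 0"
  using assms symmetric_matrix_inner_commute[OF assms(1), of x v] by (simp add: inner_commute)

lemma symmetric_matrix_invariant_subspace_eigenbasis:
  fixes S :: "real^'n^'n"
  assumes sym: "transpose S = S"
  shows "subspace U \<Longrightarrow> (\<And>x. x \<in> U \<Longrightarrow> S *v x \<in> U) \<Longrightarrow>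
    \<exists>B. B \<subseteq> U \<and> pairwise orthogonal B \<and> (\<forall>b\<in>B. norm b = 1) \<and> span B = U \<and>
      (\<forall>b\<in>B. S *v b = (b \<bullet> (S *v b)) *\<^sub>R b)"
proof (induction "dim U" arbitrary: U rule: less_induct)
  case less
  note U = less.prems(1) and inv = less.prems(2)
  show ?case
  proof (cases "U = {0}")
    case True
    then show ?thesis by (intro exI[of _ "{}"]) auto
  next
    case False
    obtain v where vU: "v \<in> U" and nv: "norm v = 1" and Sv: "S *v v = (v \<bullet> (S *v v)) *\<^sub>R v"
      using symmetric_matrix_eigenvector_in_invariant_subspace[OF sym U inv False] by blast
    have vv: "v \<bullet> v = 1" using nv by (simp add: norm_eq_1)
    define U' where "U' = {x \<in> U. x \<bullet> v = 0}"
    have U': "subspace U'" using U by (auto simp: U'_def subspace_def inner_add_left)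
    have inv': "S *v x \<in> U'" if "x \<in> U'" for x
      using that inv symmetric_matrix_eigenvector_orthogonal[OF sym Sv] by (simp add: U'_def)
    have "v \<notin> U'" using vv by (simp add: U'_def)
    moreover have "U' \<subseteq> U" by (auto simp: U'_def)
    ultimately have "U' \<subset> U" using vU by blast
    then have "dim U' < dim U" by (metis U U' dim_psubset span_eq_iff)
    then obtain B' where B': "B' \<subseteq> U'" "pairwise orthogonal B'" "\<forall>b\<in>B'. norm b = 1" "span B' = U'"
      "\<forall>b\<in>B'. S *v b = (b \<bullet> (S *v b)) *\<^sub>R b"
      using less.hyps[OF _ U' inv'] by blast
    show ?thesis
    proof (intro exI[of _ "insert v B'"] conjI)
      show sub: "insert v B' \<subseteq> U" using B'(1) vU by (auto simp: U'_def)
      show "span (insert v B') = U"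
      proof (rule antisym)
        show "span (insert v B') \<subseteq> U" using sub U by (rule span_minimal)
        show "U \<subseteq> span (insert v B')"
        proof
          fix x assume "x \<in> U"
          then have "x - (x \<bullet> v) *\<^sub>R v \<in> U'"
            using vU U vv by (simp add: U'_def subspace_diff subspace_scale inner_diff_left)
          then show "x \<in> span (insert v B')" unfolding span_breakdown_eq B'(4) by blast
        qed
      qed
    qed (use B' nv Sv in \<open>auto simp: pairwise_insert U'_def orthogonal_def inner_commute\<close>)
  qed
qed

theorem symmetric_matrix_spectral:
  fixes S :: "real^'n^'n"
  assumes sym: "transpose S = S"
  obtains B where "orthonormal_basis B" "S = onb_diag B (\<lambda>b. b \<bullet> (S *v b))"
proof -
  obtain B where "pairwise orthogonal B" "\<forall>b\<in>B. norm b = 1" "span B = UNIV"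
    and eigen: "\<forall>b\<in>B. S *v b = (b \<bullet> (S *v b)) *\<^sub>R b"
    using symmetric_matrix_invariant_subspace_eigenbasis[OF sym subspace_UNIV UNIV_I] by blast
  then have B: "orthonormal_basis B" by (simp add: orthonormal_basis_def)
  have "S *v x = onb_diag B (\<lambda>b. b \<bullet> (S *v b)) *v x" for x
  proof (rule orthonormal_basis_vector_eqI[OF B])
    fix c assume c: "c \<in> B"
    have "c \<bullet> (S *v x) = (S *v c) \<bullet> x" by (rule symmetric_matrix_inner_commute[OF sym])
    also have "\<dots> = (c \<bullet> (S *v c)) * (c \<bullet> x)" using c eigen by (metis inner_scaleR_left)
    finally show "c \<bullet> (S *v x) = c \<bullet> (onb_diag B (\<lambda>b. b \<bullet> (S *v b)) *v x)"
      by (simp add: inner_onb_diag_mult_vec[OF B c])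
  qed
  then have "S = onb_diag B (\<lambda>b. b \<bullet> (S *v b))" unfolding matrix_eq by blast
  with B show thesis by (rule that)
qed

section \<open>The log-determinant on positive definite matrices\<close>

lemma onb_diag_simultaneous_diagonalization:
  fixes D :: "real^'n^'n"
  assumes B: "orthonormal_basis B" and \<mu>: "\<And>b. b \<in> B \<Longrightarrow> 0 < \<mu> b" and D: "transpose D = D"
  shows "\<exists>R (B' :: (real^'n) set) \<nu>. transpose R = R \<and> invertible R \<and>
    R ** onb_diag B \<mu> ** R = mat 1 \<and> R ** R = onb_diag B (\<lambda>b. inverse (\<mu> b)) \<and>
    orthonormal_basis B' \<and> R ** D ** R = onb_diag B' \<nu>"
proof -
  define R where "R = onb_diag B (\<lambda>b. inverse (sqrt (\<mu> b)))"
  have R_sym: "transpose R = R" by (simp add: R_def transpose_onb_diag)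
  have "R ** onb_diag B (\<lambda>b. sqrt (\<mu> b)) = mat 1" "onb_diag B (\<lambda>b. sqrt (\<mu> b)) ** R = mat 1"
    unfolding R_def onb_diag_mult[OF B] onb_diag_one[OF B, symmetric]
    by (auto intro!: onb_diag_cong dest!: \<mu>)
  then have "invertible R" unfolding invertible_def by blast
  moreover have "R ** onb_diag B \<mu> ** R = mat 1"
    unfolding R_def onb_diag_mult[OF B] onb_diag_one[OF B, symmetric]
    by (auto intro!: onb_diag_cong dest!: \<mu> simp: field_simps)
  moreover have "R ** R = onb_diag B (\<lambda>b. inverse (\<mu> b))"
    unfolding R_def onb_diag_mult[OF B]
    by (auto intro!: onb_diag_cong dest!: \<mu> simp: inverse_mult_distrib[symmetric])
  moreover have "transpose (R ** D ** R) = R ** D ** R"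
    by (simp add: matrix_transpose_mul R_sym D matrix_mul_assoc)
  then obtain B' where "orthonormal_basis B'" "R ** D ** R = onb_diag B' (\<lambda>b. b \<bullet> ((R ** D ** R) *v b))"
    by (rule symmetric_matrix_spectral)
  ultimately show ?thesis using R_sym by blast
qed

lemma det_pos_definite_add_symmetric:
  fixes D :: "real^'n^'n"
  assumes B: "orthonormal_basis B" and \<mu>: "\<And>b. b \<in> B \<Longrightarrow> 0 < \<mu> b" and D: "transpose D = D"
  shows "\<exists>(B' :: (real^'n) set) \<nu>. orthonormal_basis B' \<and>
    trace (onb_diag B (\<lambda>b. inverse (\<mu> b)) ** D) = sum \<nu> B' \<and>
    (\<forall>t. det (onb_diag B \<mu> + t *\<^sub>R D) = det (onb_diag B \<mu>) * (\<Prod>b\<in>B'. 1 + t * \<nu> b)) \<and>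
    (\<forall>t. (\<forall>x. x \<noteq> 0 \<longrightarrow> 0 < x \<bullet> ((onb_diag B \<mu> + t *\<^sub>R D) *v x))
      \<longrightarrow> (\<forall>b\<in>B'. 0 < 1 + t * \<nu> b))"
proof -
  define N where "N = onb_diag B \<mu>"
  obtain R B' \<nu> where R: "transpose R = R" "invertible R" and RNR: "R ** N ** R = mat 1"
    and RR: "R ** R = onb_diag B (\<lambda>b. inverse (\<mu> b))" and B': "orthonormal_basis B'"
    and RDR: "R ** D ** R = onb_diag B' \<nu>"
    using onb_diag_simultaneous_diagonalization[of B \<mu>, OF B \<mu> D] unfolding N_def by blast
  have conj: "R ** (N + t *\<^sub>R D) ** R = onb_diag B' (\<lambda>b. 1 + t * \<nu> b)" for t
    by (simp add: matrix_add_ldistrib matrix_add_rdistrib matrix_scalar_ac scalar_matrix_assoc[symmetric]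
        RNR RDR onb_diag_one[OF B', symmetric] onb_diag_scaleR onb_diag_add)
  have "trace (onb_diag B (\<lambda>b. inverse (\<mu> b)) ** D) = trace (R ** (D ** R))"
    by (metis RR matrix_mul_assoc trace_mul_sym)
  then have trace: "trace (onb_diag B (\<lambda>b. inverse (\<mu> b)) ** D) = sum \<nu> B'"
    using RDR by (simp add: matrix_mul_assoc trace_onb_diag[OF B'])
  have det: "det (N + t *\<^sub>R D) = det N * (\<Prod>b\<in>B'. 1 + t * \<nu> b)" for t
  proof -
    have "det R * det N * det R = 1" using arg_cong[OF RNR, of det] by (simp add: det_mul)
    moreover have "det R * det (N + t *\<^sub>R D) * det R = (\<Prod>b\<in>B'. 1 + t * \<nu> b)"
      using arg_cong[OF conj[of t], of det] by (simp add: det_mul det_onb_diag[OF B'])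
    ultimately show ?thesis by (metis mult.commute mult.left_commute mult_1)
  qed
  have pos: "0 < 1 + t * \<nu> b"
    if b: "b \<in> B'" and pd: "\<forall>x. x \<noteq> 0 \<longrightarrow> 0 < x \<bullet> ((N + t *\<^sub>R D) *v x)" for t b
  proof -
    have "b \<noteq> 0" using B' b by (auto simp: orthonormal_basis_def)
    then have "R *v b \<noteq> 0" using R(2)
      by (metis invertible_def matrix_vector_mul_assoc matrix_vector_mul_lid matrix_vector_mult_0_right)
    have "1 + t * \<nu> b = b \<bullet> (onb_diag B' (\<lambda>b. 1 + t * \<nu> b) *v b)"
      using orthonormal_basis_inner[OF B' b b] by (simp add: onb_diag_eigenvector[OF B' b])
    also have "\<dots> = (R *v b) \<bullet> ((N + t *\<^sub>R D) *v (R *v b))"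
      unfolding conj[symmetric] using symmetric_matrix_inner_commute[OF R(1)]
      by (simp add: matrix_vector_mul_assoc[symmetric])
    finally show ?thesis using pd \<open>R *v b \<noteq> 0\<close> by simp
  qed
  show ?thesis unfolding N_def[symmetric] using B' trace det pos by blast
qed

lemma log_det_concave:
  fixes M :: "real^'n^'n"
  assumes B: "orthonormal_basis B" and \<mu>: "\<And>b. b \<in> B \<Longrightarrow> 0 < \<mu> b"
    and M: "transpose M = M" "\<And>x. x \<noteq> 0 \<Longrightarrow> 0 < x \<bullet> (M *v x)"
  shows "ln (det M) \<le> ln (det (onb_diag B \<mu>))
           + trace (onb_diag B (\<lambda>b. inverse (\<mu> b)) ** (M - onb_diag B \<mu>))"
proof -
  have sym: "transpose (M - onb_diag B \<mu>) = M - onb_diag B \<mu>"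
    using M(1) transpose_onb_diag[of B \<mu>] by (simp add: transpose_def vec_eq_iff)
  obtain B' :: "(real^'n) set" and \<nu> where B': "orthonormal_basis B'"
    and tr: "trace (onb_diag B (\<lambda>b. inverse (\<mu> b)) ** (M - onb_diag B \<mu>)) = sum \<nu> B'"
    and det: "\<forall>t. det (onb_diag B \<mu> + t *\<^sub>R (M - onb_diag B \<mu>))
                = det (onb_diag B \<mu>) * (\<Prod>b\<in>B'. 1 + t * \<nu> b)"
    and pos: "\<forall>t. (\<forall>x. x \<noteq> 0 \<longrightarrow> 0 < x \<bullet> ((onb_diag B \<mu> + t *\<^sub>R (M - onb_diag B \<mu>)) *v x))
                \<longrightarrow> (\<forall>b\<in>B'. 0 < 1 + t * \<nu> b)"
    using det_pos_definite_add_symmetric[of B \<mu>, OF B \<mu> sym] by blast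
  have \<nu>: "0 < 1 + \<nu> b" if "b \<in> B'" for b using spec[OF pos, of 1] M(2) that by simp
  have "0 < det (onb_diag B \<mu>)" using \<mu> by (simp add: det_onb_diag[OF B] prod_pos)
  moreover have "det M = det (onb_diag B \<mu>) * (\<Prod>b\<in>B'. 1 + \<nu> b)" using spec[OF det, of 1] by simp
  ultimately have "ln (det M) = ln (det (onb_diag B \<mu>)) + (\<Sum>b\<in>B'. ln (1 + \<nu> b))"
    using \<nu> orthonormal_basis_finite[OF B']
    by (simp add: ln_mult prod_pos ln_prod less_imp_neq[symmetric])
  also have "(\<Sum>b\<in>B'. ln (1 + \<nu> b)) \<le> sum \<nu> B'"
    using \<nu> ln_le_minus_one by (intro sum_mono) fastforce
  finally show ?thesis by (simp add: tr)
qed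

lemma log_det_has_derivative:
  fixes D :: "real^'n^'n"
  assumes B: "orthonormal_basis B" and \<mu>: "\<And>b. b \<in> B \<Longrightarrow> 0 < \<mu> b" and D: "transpose D = D"
  shows "((\<lambda>t. ln (det (onb_diag B \<mu> + t *\<^sub>R D)))
           has_real_derivative trace (onb_diag B (\<lambda>b. inverse (\<mu> b)) ** D)) (at 0)"
proof -
  obtain B' :: "(real^'n) set" and \<nu> where B': "orthonormal_basis B'"
    and trace: "trace (onb_diag B (\<lambda>b. inverse (\<mu> b)) ** D) = sum \<nu> B'"
    and det: "\<forall>t. det (onb_diag B \<mu> + t *\<^sub>R D) = det (onb_diag B \<mu>) * (\<Prod>b\<in>B'. 1 + t * \<nu> b)"
    using det_pos_definite_add_symmetric[of B \<mu>, OF B \<mu> D] by blast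
  have fin: "finite B'" using orthonormal_basis_finite[OF B'] .
  have det_pos: "0 < det (onb_diag B \<mu>)" using \<mu> by (simp add: det_onb_diag[OF B] prod_pos)
  have "((\<lambda>t. ln (det (onb_diag B \<mu>)) + (\<Sum>b\<in>B'. ln (1 + t * \<nu> b))) has_real_derivative sum \<nu> B')
      (at 0)"
    by (auto intro!: derivative_eq_intros)
  moreover define T where "T = (\<Inter>b\<in>B'. {t. 0 < 1 + t * \<nu> b})"
  then have "open T" and "0 \<in> T"
    by (auto intro!: open_INT fin open_Collect_less continuous_intros)
  moreover have "ln (det (onb_diag B \<mu>)) + (\<Sum>b\<in>B'. ln (1 + t * \<nu> b))
      = ln (det (onb_diag B \<mu> + t *\<^sub>R D))" if "t \<in> T" for t
    using that det_pos fin by (simp add: T_def det ln_mult prod_pos ln_prod less_imp_neq[symmetric])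
  ultimately show ?thesis unfolding trace by (rule has_field_derivative_transform_within_open)
qed

section \<open>Positive semidefinite matrices with a prescribed range\<close>

definition is_orth_proj :: "real^'n^'n \<Rightarrow> (real^'n) set \<Rightarrow> bool" where
  "is_orth_proj P W \<longleftrightarrow> (\<forall>x. P *v x \<in> W \<and> (\<forall>w\<in>W. (x - P *v x) \<bullet> w = 0))"

lemma orth_proj_unique:
  assumes W: "subspace W" and P: "is_orth_proj P W" and Q: "is_orth_proj Q W"
  shows "P = Q"
  unfolding matrix_eq
proof
  fix x
  define d where "d = P *v x - Q *v x"
  have "d \<in> W" unfolding d_def using P Q W by (simp add: is_orth_proj_def subspace_diff)
  then have "(x - Q *v x) \<bullet> d = 0" "(x - P *v x) \<bullet> d = 0"
    using P Q unfolding is_orth_proj_def by blast+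
  moreover have "d = (x - Q *v x) - (x - P *v x)" by (simp add: d_def)
  ultimately have "d \<bullet> d = 0" by (metis diff_self inner_diff_left)
  then show "P *v x = Q *v x" by (simp add: d_def)
qed

lemma orth_proj_fixes:
  assumes P: "is_orth_proj P W" and W: "subspace W" and w: "w \<in> W"
  shows "P *v w = w"
proof -
  have "w - P *v w \<in> W" using P W w by (simp add: is_orth_proj_def subspace_diff)
  then have "(w - P *v w) \<bullet> (w - P *v w) = 0" using P by (simp add: is_orth_proj_def)
  then show ?thesis by simp
qed

lemma orth_proj_exists:
  fixes W :: "(real^'n) set"
  assumes W: "subspace W"
  obtains P where "is_orth_proj P W"
proof -
  obtain B where "B \<subseteq> W" and orth: "pairwise orthogonal B" and unit: "\<And>b. b \<in> B \<Longrightarrow> norm b = 1"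
    and "independent B" and span: "span B = W"
    using orthonormal_basis_subspace[OF W] by metis
  then have fin: "finite B" using independent_imp_finite by blast
  have inner_B: "c \<bullet> b = (if b = c then 1 else 0)" if "b \<in> B" "c \<in> B" for b c
    using that orth unit unfolding pairwise_def orthogonal_def by (metis norm_eq_1)
  have "is_orth_proj (onb_diag B (\<lambda>_. 1)) W"
    unfolding is_orth_proj_def
  proof (intro allI conjI ballI)
    fix x
    show "onb_diag B (\<lambda>_. 1) *v x \<in> W"
      unfolding onb_diag_mult_vec span[symmetric] by (intro span_sum span_scale span_base)
    fix w assume "w \<in> W"
    have "orthogonal (x - onb_diag B (\<lambda>_. 1) *v x) c" if "c \<in> B" for c
    proof -
      have "c \<bullet> (onb_diag B (\<lambda>_. 1) *v x) = (\<Sum>b\<in>B. if b = c then c \<bullet> x else 0)"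
        unfolding onb_diag_mult_vec inner_sum_right
        by (rule sum.cong) (auto simp: inner_B[OF _ that])
      then have "(onb_diag B (\<lambda>_. 1) *v x) \<bullet> c = x \<bullet> c"
        using that fin by (simp add: inner_commute)
      then show ?thesis by (simp add: orthogonal_def inner_diff_left)
    qed
    then show "(x - onb_diag B (\<lambda>_. 1) *v x) \<bullet> w = 0"
      using orthogonal_to_span \<open>w \<in> W\<close> span by (metis orthogonal_def)
  qed
  then show thesis by (rule that)
qed

lemma orth_proj_onb_diag:
  assumes B: "orthonormal_basis B" and S: "S \<subseteq> B"
  shows "is_orth_proj (onb_diag B (\<lambda>b. of_bool (b \<in> S))) (span S)"
  unfolding is_orth_proj_def
proof (intro allI conjI ballI)
  fix x
  have "onb_diag B (\<lambda>b. of_bool (b \<in> S)) *v x = (\<Sum>b\<in>S. (b \<bullet> x) *\<^sub>R b)"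
    unfolding onb_diag_mult_vec using S orthonormal_basis_finite[OF B]
    by (intro sum.mono_neutral_cong_right) auto
  then show "onb_diag B (\<lambda>b. of_bool (b \<in> S)) *v x \<in> span S"
    by (simp add: span_sum span_scale span_base)
  fix w assume "w \<in> span S"
  have eq: "(onb_diag B (\<lambda>b. of_bool (b \<in> S)) *v x) \<bullet> c = x \<bullet> c" if "c \<in> S" for c
    using that S inner_onb_diag_mult_vec[OF B, of c] by (auto simp: inner_commute)
  have "orthogonal (x - onb_diag B (\<lambda>b. of_bool (b \<in> S)) *v x) w"
    using \<open>w \<in> span S\<close> by (rule orthogonal_to_span) (simp add: eq orthogonal_def inner_diff_left)
  then show "(x - onb_diag B (\<lambda>b. of_bool (b \<in> S)) *v x) \<bullet> w = 0"
    by (simp add: orthogonal_def)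
qed

lemma orth_proj_complement_mult:
  assumes P: "is_orth_proj P W" and W: "subspace W" and X: "\<And>x. X *v x \<in> W"
  shows "(A + mat 1 - P) ** X = A ** X"
proof (rule iffD2[OF matrix_eq], rule allI)
  fix x
  have "((A + mat 1 - P) ** X) *v x = A *v (X *v x) + (X *v x - P *v (X *v x))"
    by (simp add: matrix_vector_mul_assoc[symmetric] matrix_vector_mult_add_rdistrib
        matrix_vector_mult_diff_rdistrib)
  also have "\<dots> = (A ** X) *v x"
    using orth_proj_fixes[OF P W X, of x] by (simp add: matrix_vector_mul_assoc[symmetric])
  finally show "((A + mat 1 - P) ** X) *v x = (A ** X) *v x" .
qed

lemma subset_if_det_add_orth_proj_nonzero:
  fixes V :: "real^'n^'n"
  assumes W: "subspace W" and P: "is_orth_proj P W" and det: "det (V + mat 1 - P) \<noteq> 0"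
    and V_U: "\<And>x. V *v x \<in> U" and U_W: "U \<subseteq> W"
  shows "W \<subseteq> U"
proof
  fix w assume w: "w \<in> W"
  obtain x where x: "(V + mat 1 - P) *v x = w"
    using det by (metis invertible_det_nz invertible_def matrix_vector_mul_assoc matrix_vector_mul_lid)
  then have "x - P *v x = w - V *v x"
    by (simp add: matrix_vector_mult_add_rdistrib matrix_vector_mult_diff_rdistrib algebra_simps)
  also have "\<dots> \<in> W" using w V_U U_W W by (meson subsetD subspace_diff)
  finally have "(x - P *v x) \<bullet> (x - P *v x) = 0" using P by (simp add: is_orth_proj_def)
  then have "w = V *v x" using x
    by (simp add: matrix_vector_mult_add_rdistrib matrix_vector_mult_diff_rdistrib)
  then show "w \<in> U" using V_U by simp
qed

definition psd_with_range :: "real^'n^'n \<Rightarrow> (real^'n) set \<Rightarrow> bool" where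
  "psd_with_range V W \<longleftrightarrow> transpose V = V \<and> (\<forall>x. 0 \<le> x \<bullet> (V *v x)) \<and> (\<forall>x. V *v x \<in> W)
     \<and> (\<forall>x\<in>W. V *v x = 0 \<longrightarrow> x = 0)"

lemma psd_with_range_spectral:
  assumes V: "psd_with_range V W" and W: "subspace W"
  obtains B l where "orthonormal_basis B" "V = onb_diag B l" "\<forall>b. 0 \<le> l b"
    "span {b\<in>B. l b \<noteq> 0} = W"
proof -
  have sym: "transpose V = V" and into: "\<And>x. V *v x \<in> W"
    and inj: "\<And>x. x \<in> W \<Longrightarrow> V *v x = 0 \<Longrightarrow> x = 0"
    using V by (auto simp: psd_with_range_def)
  obtain B where B: "orthonormal_basis B" and V_eq: "V = onb_diag B (\<lambda>b. b \<bullet> (V *v b))"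
    using symmetric_matrix_spectral[OF sym] by blast
  define l where "l b = b \<bullet> (V *v b)" for b
  have l: "0 \<le> l b" for b using V by (simp add: l_def psd_with_range_def)
  have Vl: "V = onb_diag B l" using V_eq by (simp add: l_def[abs_def])
  define S where "S = {b\<in>B. l b \<noteq> 0}"
  have range: "range ((*v) V) = span S" unfolding Vl S_def by (rule range_onb_diag[OF B])
  have "span S \<subseteq> W" unfolding range[symmetric] using into by blast
  moreover have "W \<subseteq> span S"
  proof
    fix w assume w: "w \<in> W"
    define P where "P = onb_diag B (\<lambda>b. of_bool (l b \<noteq> 0))"
    have Pw: "P *v w \<in> span S"
      using range_onb_diag[OF B, of "\<lambda>b. of_bool (l b \<noteq> 0)"] by (auto simp: P_def S_def)
    have "V ** P = V" unfolding Vl P_def onb_diag_mult[OF B] by (rule onb_diag_cong) simp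
    then have "V *v (w - P *v w) = 0"
      by (simp add: matrix_vector_mult_diff_distrib matrix_vector_mul_assoc)
    moreover have "w - P *v w \<in> W"
      using Pw w W \<open>span S \<subseteq> W\<close> by (meson subsetD subspace_diff)
    ultimately show "w \<in> span S" using inj Pw by fastforce
  qed
  ultimately show thesis using that[OF B Vl] l by (simp add: S_def)
qed

lemma pdet_pos:
  assumes "psd_with_range V W" "subspace W"
  shows "0 < pdet V"
proof -
  obtain B l where B: "orthonormal_basis B" and V: "V = onb_diag B l" and l: "\<forall>b. 0 \<le> l b"
    using psd_with_range_spectral[OF assms] by blast
  have "0 < prod l {b\<in>B. l b \<noteq> 0}" using l by (intro prod_pos) (simp add: less_le)
  then show ?thesis by (simp add: V pdet_onb_diag[OF B])
qed

lemma trace_mp_pinv_mult_self: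
  assumes "psd_with_range V W" "subspace W"
  shows "trace (mp_pinv V ** V) = real (dim W)"
proof -
  obtain B l where B: "orthonormal_basis B" and V: "V = onb_diag B l"
    and span: "span {b\<in>B. l b \<noteq> 0} = W"
    using psd_with_range_spectral[OF assms] by blast
  have "independent {b\<in>B. l b \<noteq> 0}"
    by (rule independent_mono[OF orthonormal_basis_independent[OF B]]) auto
  then have "dim W = card {b\<in>B. l b \<noteq> 0}" unfolding span[symmetric]
    by (simp add: dim_span dim_eq_card_independent)
  moreover have "trace (mp_pinv V ** V) = (\<Sum>b\<in>B. inverse (l b) * l b)"
    by (simp add: V mp_pinv_onb_diag[OF B] onb_diag_mult[OF B] trace_onb_diag[OF B])
  moreover have "(\<Sum>b\<in>B. inverse (l b) * l b) = (\<Sum>b\<in>B. of_bool (l b \<noteq> 0))"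
    by (rule sum.cong) auto
  moreover have "B \<inter> {b. l b \<noteq> 0} = {b\<in>B. l b \<noteq> 0}" by blast
  ultimately show ?thesis using orthonormal_basis_finite[OF B] by simp
qed

text \<open>On \<open>W\<^sup>\<perp>\<close> the matrix \<open>V + I - P\<close> is the identity, so it is invertible and carries the
  nonzero spectrum of \<open>V\<close>; its inverse is \<open>V\<^sup>\<dagger> + I - P\<close>.\<close>

lemma psd_with_range_regularize:
  assumes V: "psd_with_range V W" and W: "subspace W" and P: "is_orth_proj P W"
  obtains B \<mu> where "orthonormal_basis B" "\<forall>b. 0 < \<mu> b" "V + mat 1 - P = onb_diag B \<mu>"
    "mp_pinv V + mat 1 - P = onb_diag B (\<lambda>b. inverse (\<mu> b))" "pdet V = det (V + mat 1 - P)"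
proof -
  obtain B l where B: "orthonormal_basis B" and Vl: "V = onb_diag B l" and l: "\<forall>b. 0 \<le> l b"
    and span: "span {b\<in>B. l b \<noteq> 0} = W"
    using psd_with_range_spectral[OF V W] by blast
  have "P = onb_diag B (\<lambda>b. of_bool (b \<in> {b\<in>B. l b \<noteq> 0}))"
    using orth_proj_unique[OF W P] orth_proj_onb_diag[OF B, of "{b\<in>B. l b \<noteq> 0}"] span by auto
  then have P_eq: "P = onb_diag B (\<lambda>b. of_bool (l b \<noteq> 0))" by (auto intro: onb_diag_cong)
  define \<mu> where "\<mu> b = (if l b = 0 then 1 else l b)" for b
  have "\<forall>b. 0 < \<mu> b" using l by (simp add: \<mu>_def less_le)
  moreover have N: "V + mat 1 - P = onb_diag B \<mu>"
    unfolding Vl P_eq onb_diag_one[OF B, symmetric] onb_diag_add onb_diag_diff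
    by (rule onb_diag_cong) (simp add: \<mu>_def)
  moreover have "mp_pinv V + mat 1 - P = onb_diag B (\<lambda>b. inverse (\<mu> b))"
    unfolding Vl P_eq mp_pinv_onb_diag[OF B] onb_diag_one[OF B, symmetric] onb_diag_add onb_diag_diff
    by (rule onb_diag_cong) (simp add: \<mu>_def)
  moreover have "pdet V = det (V + mat 1 - P)"
  proof -
    have "pdet V = prod l {b\<in>B. l b \<noteq> 0}" by (simp add: Vl pdet_onb_diag[OF B])
    also have "\<dots> = prod \<mu> B" using orthonormal_basis_finite[OF B]
      by (intro prod.mono_neutral_cong_left) (auto simp: \<mu>_def)
    finally show ?thesis by (simp add: N det_onb_diag[OF B])
  qed
  ultimately show thesis using that[OF B] by blast
qed

lemma pdet_eq_det_add_orth_proj: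
  assumes "psd_with_range V W" "subspace W" "is_orth_proj P W"
  shows "pdet V = det (V + mat 1 - P)"
  using psd_with_range_regularize[OF assms] by blast

lemma log_pdet_concave:
  assumes V: "psd_with_range V W" and V': "psd_with_range V' W" and W: "subspace W"
  shows "ln (pdet V') \<le> ln (pdet V) + trace (mp_pinv V ** (V' - V))"
proof -
  obtain P where P: "is_orth_proj P W" using orth_proj_exists[OF W] by blast
  obtain B \<mu> where B: "orthonormal_basis B" and \<mu>: "\<forall>b. 0 < \<mu> b"
    and N: "V + mat 1 - P = onb_diag B \<mu>"
    and N_inv: "mp_pinv V + mat 1 - P = onb_diag B (\<lambda>b. inverse (\<mu> b))"
    and pdet: "pdet V = det (V + mat 1 - P)"
    by (rule psd_with_range_regularize[OF V W P])
  obtain B' \<mu>' where B': "orthonormal_basis B'" and \<mu>': "\<forall>b. 0 < \<mu>' b"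
    and N': "V' + mat 1 - P = onb_diag B' \<mu>'" and pdet': "pdet V' = det (V' + mat 1 - P)"
    using psd_with_range_regularize[OF V' W P] by blast
  have "ln (det (V' + mat 1 - P)) \<le> ln (det (onb_diag B \<mu>))
      + trace (onb_diag B (\<lambda>b. inverse (\<mu> b)) ** (V' + mat 1 - P - onb_diag B \<mu>))"
    using \<mu> \<mu>' onb_diag_pos_definite[OF B', of \<mu>']
    by (intro log_det_concave[OF B]) (simp_all add: N' transpose_onb_diag)
  also have "V' + mat 1 - P - onb_diag B \<mu> = V' - V" by (simp add: N[symmetric])
  also have "trace (onb_diag B (\<lambda>b. inverse (\<mu> b)) ** (V' - V)) = trace (mp_pinv V ** (V' - V))"
    using V V' W unfolding N_inv[symmetric] psd_with_range_def
    by (subst orth_proj_complement_mult[OF P W]) (simp_all add: matrix_vector_mult_diff_rdistrib subspace_diff)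
  finally show ?thesis by (simp add: pdet pdet' N)
qed

lemma log_det_regularized_has_derivative:
  assumes V: "psd_with_range V W" and W: "subspace W" and P: "is_orth_proj P W"
    and D: "transpose D = D" and D_W: "\<And>x. D *v x \<in> W"
  shows "((\<lambda>t. ln (det (V + t *\<^sub>R D + mat 1 - P))) has_real_derivative trace (mp_pinv V ** D)) (at 0)"
proof -
  obtain B \<mu> where B: "orthonormal_basis B" and \<mu>: "\<forall>b. 0 < \<mu> b"
    and N: "V + mat 1 - P = onb_diag B \<mu>"
    and N_inv: "mp_pinv V + mat 1 - P = onb_diag B (\<lambda>b. inverse (\<mu> b))"
    using psd_with_range_regularize[OF V W P] by blast
  have "(\<lambda>t. ln (det (V + t *\<^sub>R D + mat 1 - P))) = (\<lambda>t. ln (det (onb_diag B \<mu> + t *\<^sub>R D)))"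
    by (rule ext) (simp add: N[symmetric] algebra_simps)
  moreover have "trace (mp_pinv V ** D) = trace (onb_diag B (\<lambda>b. inverse (\<mu> b)) ** D)"
    unfolding N_inv[symmetric] orth_proj_complement_mult[OF P W D_W] ..
  moreover have "((\<lambda>t. ln (det (onb_diag B \<mu> + t *\<^sub>R D)))
      has_real_derivative trace (onb_diag B (\<lambda>b. inverse (\<mu> b)) ** D)) (at 0)"
    using \<mu> by (intro log_det_has_derivative[OF B _ D]) simp
  ultimately show ?thesis by simp
qed

section \<open>Design matrices and the two objectives\<close>

definition design_span :: "nat \<Rightarrow> (nat \<Rightarrow> nat set) \<Rightarrow> (nat \<Rightarrow> nat \<Rightarrow> real^'d) \<Rightarrow> nat \<Rightarrow> (real^'d) set"
  where "design_span M A e a = span ((\<lambda>i. e i a) ` Rset M A a)"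

lemma finite_Rset: "finite (Rset M A a)"
  by (simp add: Rset_def)

lemma subspace_design_span: "subspace (design_span M A e a)"
  by (simp add: design_span_def)

lemma Vmat_mult_vec: "Vmat M A e p a *v x = (\<Sum>j\<in>Rset M A a. (e j a \<bullet> x) *\<^sub>R (p j a *\<^sub>R e j a))"
  by (simp add: Vmat_def matrix_vector_mult_sum scaleR_matrix_vector_assoc[symmetric] outer_mult_vec
      mult.commute)

lemma transpose_Vmat: "transpose (Vmat M A e p a) = Vmat M A e p a"
  by (simp add: Vmat_def transpose_def outer_def sum_component vec_eq_iff mult_ac)

lemma Vmat_quadratic_form: "x \<bullet> (Vmat M A e p a *v x) = (\<Sum>j\<in>Rset M A a. p j a * (e j a \<bullet> x)\<^sup>2)"
  by (simp add: Vmat_mult_vec inner_sum_right power2_eq_square inner_commute mult_ac)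

lemma Vmat_linear:
  "Vmat M A e (\<lambda>j b. p j b + t * r j b) a = Vmat M A e p a + t *\<^sub>R Vmat M A e r a"
  by (simp add: Vmat_def sum.distrib scaleR_add_left scaleR_sum_right)

lemma Vmat_cong: "(\<And>j. j \<in> Rset M A a \<Longrightarrow> p j a = q j a) \<Longrightarrow> Vmat M A e p a = Vmat M A e q a"
  by (simp add: Vmat_def cong: sum.cong)

lemma Vmat_in_span_scaled: "Vmat M A e p a *v x \<in> span ((\<lambda>i. p i a *\<^sub>R e i a) ` Rset M A a)"
  unfolding Vmat_mult_vec by (intro span_sum span_scale span_base) simp

lemma span_scaled_subset_design_span:
  "span ((\<lambda>i. p i a *\<^sub>R e i a) ` Rset M A a) \<subseteq> design_span M A e a"
  unfolding design_span_def by (intro span_minimal subspace_span) (auto intro: span_scale span_base)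

lemma Vmat_in_design_span: "Vmat M A e p a *v x \<in> design_span M A e a"
  using Vmat_in_span_scaled span_scaled_subset_design_span by blast

lemma trace_mult_Vmat:
  "trace (Q ** Vmat M A e p a) = (\<Sum>j\<in>Rset M A a. p j a * (e j a \<bullet> (Q *v e j a)))"
  by (simp add: Vmat_def matrix_mult_sum_right matrix_scalar_ac trace_sum trace_scaleR
      trace_mult_outer scaleR_matrix_vector_assoc[symmetric])

lemma sum_Rset_swap:
  assumes A: "\<forall>i\<in>{1..M}. A i \<subseteq> {1..K}"
  shows "(\<Sum>a\<in>{1..K}. \<Sum>j\<in>Rset M A a. f j a) = (\<Sum>i\<in>{1..M}. \<Sum>a\<in>A i. f i a)"
proof -
  have "(\<Sum>a\<in>{1..K}. \<Sum>j\<in>Rset M A a. f j a) = (\<Sum>i\<in>{1..M}. \<Sum>a\<in>{a\<in>{1..K}. a \<in> A i}. f i a)"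
    unfolding Rset_def by (rule sum.swap_restrict[symmetric]) simp_all
  also have "\<dots> = (\<Sum>i\<in>{1..M}. \<Sum>a\<in>A i. f i a)"
  proof (rule sum.cong[OF refl])
    fix i assume "i \<in> {1..M}"
    then have "{a\<in>{1..K}. a \<in> A i} = A i" using A by blast
    then show "(\<Sum>a\<in>{a\<in>{1..K}. a \<in> A i}. f i a) = (\<Sum>a\<in>A i. f i a)" by simp
  qed
  finally show ?thesis .
qed

lemma Cset_rowD:
  assumes "\<forall>i\<in>{1..M}. A i \<subseteq> {1..K}" "p \<in> Cset M K A e" "i \<in> {1..M}"
  shows "finite (A i)" "\<And>a. a \<in> A i \<Longrightarrow> 0 \<le> p i a" "sum (p i) (A i) = 1"
  using assms finite_subset[of "A i" "{1..K}"] by (auto simp: Cset_def)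

lemma Cset_span_scaled:
  assumes p: "p \<in> Cset M K A e" and a: "a \<in> {1..K}"
  shows "span ((\<lambda>i. p i a *\<^sub>R e i a) ` Rset M A a) = design_span M A e a"
proof (cases "Rset M A a = {}")
  case True
  then show ?thesis by (simp add: design_span_def)
next
  case False
  then have "dim ((\<lambda>i. p i a *\<^sub>R e i a) ` Rset M A a) = dim ((\<lambda>i. e i a) ` Rset M A a)"
    using p a by (auto simp: Cset_def)
  then show ?thesis
    using span_scaled_subset_design_span
    by (intro subspace_dim_equal) (simp_all add: subspace_design_span design_span_def)
qed

lemma psd_with_range_Vmat:
  assumes p: "p \<in> Cset M K A e" and a: "a \<in> {1..K}"
  shows "psd_with_range (Vmat M A e p a) (design_span M A e a)"
  unfolding psd_with_range_def
proof (intro conjI allI ballI impI transpose_Vmat Vmat_in_design_span)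
  have p_nonneg: "0 \<le> p j a" if "j \<in> Rset M A a" for j
    using p that by (auto simp: Cset_def Rset_def)
  then show "0 \<le> x \<bullet> (Vmat M A e p a *v x)" for x
    by (simp add: Vmat_quadratic_form sum_nonneg)
  fix x assume x: "x \<in> design_span M A e a" and "Vmat M A e p a *v x = 0"
  then have "(\<Sum>j\<in>Rset M A a. p j a * (e j a \<bullet> x)\<^sup>2) = 0" by (simp flip: Vmat_quadratic_form)
  then have zero: "p j a * (e j a \<bullet> x) = 0" if "j \<in> Rset M A a" for j
    using that p_nonneg by (subst (asm) sum_nonneg_eq_0_iff) (auto simp: finite_Rset power2_eq_square)
  have "orthogonal x y" if y: "y \<in> design_span M A e a" for y
  proof (rule orthogonal_to_span)
    show "y \<in> span ((\<lambda>i. p i a *\<^sub>R e i a) ` Rset M A a)" using y Cset_span_scaled[OF p a] by simp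
    fix z assume "z \<in> (\<lambda>i. p i a *\<^sub>R e i a) ` Rset M A a"
    then show "orthogonal x z" using zero by (auto simp: orthogonal_def inner_commute)
  qed
  then show "x = 0" using x unfolding orthogonal_def by (metis inner_eq_zero_iff)
qed

text \<open>\<open>leverage M A e p i a\<close> is the partial derivative of \<open>Fobj M K A e\<close> in \<open>p i a\<close>.\<close>

definition leverage :: "nat \<Rightarrow> (nat \<Rightarrow> nat set) \<Rightarrow> (nat \<Rightarrow> nat \<Rightarrow> real^'d) \<Rightarrow> (nat \<Rightarrow> nat \<Rightarrow> real)
    \<Rightarrow> nat \<Rightarrow> nat \<Rightarrow> real" where
  "leverage M A e p i a = e i a \<bullet> (mp_pinv (Vmat M A e p a) *v e i a)"

lemma Gobj_leverage: "Gobj M A e p = (\<Sum>i\<in>{1..M}. Max (leverage M A e p i ` A i))"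
  by (simp add: Gobj_def leverage_def)

lemma trace_mp_pinv_mult_Vmat:
  "trace (mp_pinv (Vmat M A e p a) ** Vmat M A e q a) = (\<Sum>j\<in>Rset M A a. q j a * leverage M A e p j a)"
  by (simp add: trace_mult_Vmat leverage_def)

lemma sum_weighted_leverage:
  assumes A: "\<forall>i\<in>{1..M}. A i \<subseteq> {1..K}" and p: "p \<in> Cset M K A e"
  shows "(\<Sum>i\<in>{1..M}. \<Sum>a\<in>A i. p i a * leverage M A e p i a) = real (\<Sum>a\<in>{1..K}. dval M A e a)"
proof -
  have "(\<Sum>i\<in>{1..M}. \<Sum>a\<in>A i. p i a * leverage M A e p i a)
      = (\<Sum>a\<in>{1..K}. trace (mp_pinv (Vmat M A e p a) ** Vmat M A e p a))"
    by (subst sum_Rset_swap[OF A, symmetric]) (simp add: trace_mp_pinv_mult_Vmat)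
  also have "\<dots> = (\<Sum>a\<in>{1..K}. real (dval M A e a))"
    using trace_mp_pinv_mult_self[OF psd_with_range_Vmat[OF p] subspace_design_span]
    by (simp add: dval_def design_span_def)
  finally show ?thesis by simp
qed

lemma convex_combination_le_Max:
  fixes w g :: "'a \<Rightarrow> real"
  assumes "finite S" "\<And>a. a \<in> S \<Longrightarrow> 0 \<le> w a" "sum w S = 1"
  shows "(\<Sum>a\<in>S. w a * g a) \<le> Max (g ` S)"
proof -
  have "(\<Sum>a\<in>S. w a * g a) \<le> (\<Sum>a\<in>S. w a * Max (g ` S))"
    using assms by (intro sum_mono mult_left_mono) auto
  also have "\<dots> = Max (g ` S)" using assms(3) by (simp add: sum_distrib_right[symmetric])
  finally show ?thesis .
qed

lemma dval_sum_le_Gobj: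
  assumes A: "\<forall>i\<in>{1..M}. A i \<subseteq> {1..K}" and p: "p \<in> Cset M K A e"
  shows "real (\<Sum>a\<in>{1..K}. dval M A e a) \<le> Gobj M A e p"
  unfolding sum_weighted_leverage[OF A p, symmetric] Gobj_leverage
  by (intro sum_mono convex_combination_le_Max Cset_rowD[OF A p])

lemma Fobj_le_linearization:
  assumes A: "\<forall>i\<in>{1..M}. A i \<subseteq> {1..K}" and p: "p \<in> Cset M K A e" and q: "q \<in> Cset M K A e"
  shows "Fobj M K A e q \<le> Fobj M K A e p + (\<Sum>i\<in>{1..M}. \<Sum>a\<in>A i. q i a * leverage M A e p i a)
           - real (\<Sum>a\<in>{1..K}. dval M A e a)"
proof -
  let ?lin = "\<lambda>q a. \<Sum>j\<in>Rset M A a. q j a * leverage M A e p j a"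
  have "ln (pdet (Vmat M A e q a)) \<le> ln (pdet (Vmat M A e p a)) + (?lin q a - ?lin p a)"
    if a: "a \<in> {1..K}" for a
    using log_pdet_concave[OF psd_with_range_Vmat[OF p a] psd_with_range_Vmat[OF q a] subspace_design_span]
    by (simp add: matrix_diff_ldistrib trace_sub trace_mp_pinv_mult_Vmat)
  then have "Fobj M K A e q \<le> (\<Sum>a\<in>{1..K}. ln (pdet (Vmat M A e p a)) + (?lin q a - ?lin p a))"
    unfolding Fobj_def by (rule sum_mono)
  also have "\<dots> = Fobj M K A e p + (\<Sum>a\<in>{1..K}. ?lin q a) - (\<Sum>a\<in>{1..K}. ?lin p a)"
    by (simp add: Fobj_def sum.distrib sum_subtractf)
  also have "\<dots> = Fobj M K A e p + (\<Sum>i\<in>{1..M}. \<Sum>a\<in>A i. q i a * leverage M A e p i a)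
      - (\<Sum>i\<in>{1..M}. \<Sum>a\<in>A i. p i a * leverage M A e p i a)"
    by (simp only: sum_Rset_swap[OF A])
  finally show ?thesis by (simp only: sum_weighted_leverage[OF A p])
qed

lemma Fobj_max_if_Gobj_eq:
  assumes A: "\<forall>i\<in>{1..M}. A i \<subseteq> {1..K}" and p: "p \<in> Cset M K A e"
    and G: "Gobj M A e p = real (\<Sum>a\<in>{1..K}. dval M A e a)" and q: "q \<in> Cset M K A e"
  shows "Fobj M K A e q \<le> Fobj M K A e p"
proof -
  have "(\<Sum>i\<in>{1..M}. \<Sum>a\<in>A i. q i a * leverage M A e p i a) \<le> Gobj M A e p"
    unfolding Gobj_leverage by (intro sum_mono convex_combination_le_Max Cset_rowD[OF A q])
  then show ?thesis using Fobj_le_linearization[OF A p q] G by linarith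
qed

section \<open>Maximisers of the log-determinant objective\<close>

text \<open>Moving towards \<open>q\<close> keeps a positive multiple \<open>(1 - t) p\<close> of the old weights, so no
  direction \<open>e i a\<close> of positive weight is lost and the rank condition persists.\<close>

lemma Cset_segment:
  assumes p: "p \<in> Cset M K A e"
    and q: "\<And>j. j \<in> {1..M} \<Longrightarrow> (\<forall>b\<in>A j. 0 \<le> q j b) \<and> sum (q j) (A j) = 1"
    and t: "0 \<le> t" "t < 1"
  shows "(\<lambda>j b. p j b + t * (q j b - p j b)) \<in> Cset M K A e"
proof -
  define pt where "pt j b = (1 - t) * p j b + t * q j b" for j b
  have p_row: "\<forall>b\<in>A j. 0 \<le> p j b" "sum (p j) (A j) = 1" if "j \<in> {1..M}" for j
    using p that by (auto simp: Cset_def)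
  have pt_row: "(\<forall>b\<in>A j. 0 \<le> pt j b) \<and> sum (pt j) (A j) = 1" if j: "j \<in> {1..M}" for j
    using p_row[OF j] q[OF j] t by (simp add: pt_def sum.distrib sum_distrib_left[symmetric])
  have span_pt: "span ((\<lambda>i. pt i a *\<^sub>R e i a) ` Rset M A a) = design_span M A e a"
    if a: "a \<in> {1..K}" for a
  proof (rule antisym[OF span_scaled_subset_design_span])
    have "p j a *\<^sub>R e j a \<in> span ((\<lambda>i. pt i a *\<^sub>R e i a) ` Rset M A a)" if j: "j \<in> Rset M A a" for j
    proof (cases "p j a = 0")
      case False
      have j': "j \<in> {1..M}" "a \<in> A j" using j by (auto simp: Rset_def)
      then have "0 < p j a" using False p_row by (simp add: less_le)
      then have "0 < pt j a" using q[OF j'(1)] j'(2) t by (simp add: pt_def add_pos_nonneg)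
      then have "p j a *\<^sub>R e j a = (p j a / pt j a) *\<^sub>R (pt j a *\<^sub>R e j a)" by simp
      also have "\<dots> \<in> span ((\<lambda>i. pt i a *\<^sub>R e i a) ` Rset M A a)"
        using j by (intro span_scale span_base) auto
      finally show ?thesis .
    qed (simp add: span_zero)
    then have "span ((\<lambda>i. p i a *\<^sub>R e i a) ` Rset M A a) \<subseteq> span ((\<lambda>i. pt i a *\<^sub>R e i a) ` Rset M A a)"
      by (intro span_minimal subspace_span) auto
    then show "design_span M A e a \<subseteq> span ((\<lambda>i. pt i a *\<^sub>R e i a) ` Rset M A a)"
      using Cset_span_scaled[OF p a] by simp
  qed
  have "dim (span ((\<lambda>i. pt i a *\<^sub>R e i a) ` Rset M A a)) = dim (span ((\<lambda>i. e i a) ` Rset M A a))"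
    if "a \<in> {1..K}" for a
    unfolding span_pt[OF that] design_span_def ..
  then have "pt \<in> Cset M K A e" using pt_row by (auto simp: Cset_def)
  moreover have "pt = (\<lambda>j b. p j b + t * (q j b - p j b))" by (simp add: pt_def fun_eq_iff algebra_simps)
  ultimately show ?thesis by simp
qed

lemma Fobj_segment_has_derivative:
  assumes A: "\<forall>i\<in>{1..M}. A i \<subseteq> {1..K}" and p: "p \<in> Cset M K A e"
    and segment: "\<And>t. 0 \<le> t \<Longrightarrow> t < 1 \<Longrightarrow> (\<lambda>j b. p j b + t * r j b) \<in> Cset M K A e"
  shows "\<exists>\<Phi>. (\<Phi> has_real_derivative (\<Sum>i\<in>{1..M}. \<Sum>a\<in>A i. r i a * leverage M A e p i a)) (at 0)
    \<and> (\<forall>t. 0 \<le> t \<and> t < 1 \<longrightarrow> \<Phi> t = Fobj M K A e (\<lambda>j b. p j b + t * r j b))"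
proof -
  have "\<forall>a. \<exists>P. is_orth_proj P (design_span M A e a)"
    by (metis orth_proj_exists subspace_design_span)
  then obtain P where P: "\<And>a. is_orth_proj (P a) (design_span M A e a)" by metis
  define \<Phi> where "\<Phi> t = (\<Sum>a\<in>{1..K}. ln (det (Vmat M A e p a + t *\<^sub>R Vmat M A e r a + mat 1 - P a)))"
    for t
  have "(\<Phi> has_real_derivative (\<Sum>a\<in>{1..K}. trace (mp_pinv (Vmat M A e p a) ** Vmat M A e r a))) (at 0)"
    unfolding \<Phi>_def
    by (rule DERIV_sum, rule log_det_regularized_has_derivative[OF psd_with_range_Vmat[OF p]
          subspace_design_span P transpose_Vmat Vmat_in_design_span])
  moreover have "(\<Sum>a\<in>{1..K}. trace (mp_pinv (Vmat M A e p a) ** Vmat M A e r a))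
      = (\<Sum>i\<in>{1..M}. \<Sum>a\<in>A i. r i a * leverage M A e p i a)"
    unfolding trace_mp_pinv_mult_Vmat by (rule sum_Rset_swap[OF A])
  moreover have "\<Phi> t = Fobj M K A e (\<lambda>j b. p j b + t * r j b)" if t: "0 \<le> t" "t < 1" for t
  proof -
    have "pdet (Vmat M A e (\<lambda>j b. p j b + t * r j b) a)
        = det (Vmat M A e p a + t *\<^sub>R Vmat M A e r a + mat 1 - P a)" if a: "a \<in> {1..K}" for a
      using pdet_eq_det_add_orth_proj[OF psd_with_range_Vmat[OF segment[OF t] a]
          subspace_design_span P] by (simp only: Vmat_linear)
    then show ?thesis by (simp add: \<Phi>_def Fobj_def)
  qed
  ultimately show ?thesis by auto
qed

lemma leverage_above_average_if_Gobj_ne: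
  assumes A: "\<forall>i\<in>{1..M}. A i \<subseteq> {1..K}" and p: "p \<in> Cset M K A e"
    and G: "Gobj M A e p \<noteq> real (\<Sum>a\<in>{1..K}. dval M A e a)"
  obtains i a\<^sub>0 where "i \<in> {1..M}" "a\<^sub>0 \<in> A i"
    "(\<Sum>a\<in>A i. p i a * leverage M A e p i a) < leverage M A e p i a\<^sub>0"
proof -
  define g where "g = leverage M A e p"
  have "(\<Sum>i\<in>{1..M}. \<Sum>a\<in>A i. p i a * g i a) < (\<Sum>i\<in>{1..M}. Max (g i ` A i))"
    using G dval_sum_le_Gobj[OF A p] sum_weighted_leverage[OF A p] by (simp add: Gobj_leverage g_def)
  then obtain i where i: "i \<in> {1..M}" and "(\<Sum>a\<in>A i. p i a * g i a) < Max (g i ` A i)"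
    by (meson not_less sum_mono)
  moreover have "finite (A i)" "A i \<noteq> {}" using Cset_rowD[OF A p i] by auto
  ultimately obtain a\<^sub>0 where "a\<^sub>0 \<in> A i" "(\<Sum>a\<in>A i. p i a * g i a) < g i a\<^sub>0"
    by (metis (no_types, lifting) Max_in finite_imageI image_iff image_is_empty)
  then show thesis using that i by (simp add: g_def)
qed

lemma Gobj_eq_if_Fobj_max:
  assumes A: "\<forall>i\<in>{1..M}. A i \<subseteq> {1..K}" and p: "p \<in> Cset M K A e"
    and F_max: "\<forall>q\<in>Cset M K A e. Fobj M K A e q \<le> Fobj M K A e p"
  shows "Gobj M A e p = real (\<Sum>a\<in>{1..K}. dval M A e a)"
proof (rule ccontr)
  define g where "g = leverage M A e p"
  assume "Gobj M A e p \<noteq> real (\<Sum>a\<in>{1..K}. dval M A e a)"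
  then obtain i a\<^sub>0 where i: "i \<in> {1..M}" and a\<^sub>0: "a\<^sub>0 \<in> A i"
    and gain: "(\<Sum>a\<in>A i. p i a * g i a) < g i a\<^sub>0"
    unfolding g_def by (rule leverage_above_average_if_Gobj_ne[OF A p])
  define r where "r j b = (if j = i then of_bool (b = a\<^sub>0) else p j b) - p j b" for j b
  have "finite (A i)" using Cset_rowD[OF A p i] by simp
  have segment: "(\<lambda>j b. p j b + t * r j b) \<in> Cset M K A e" if "0 \<le> t" "t < 1" for t
    unfolding r_def using Cset_segment[OF p _ that] Cset_rowD[OF A p] \<open>finite (A i)\<close> a\<^sub>0
    by (simp add: sum.If_cases)
  obtain \<Phi> where \<Phi>: "(\<Phi> has_real_derivative (\<Sum>j\<in>{1..M}. \<Sum>b\<in>A j. r j b * g j b)) (at 0)"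
    and \<Phi>_F: "\<forall>t. 0 \<le> t \<and> t < 1 \<longrightarrow> \<Phi> t = Fobj M K A e (\<lambda>j b. p j b + t * r j b)"
    using Fobj_segment_has_derivative[OF A p segment] unfolding g_def by blast
  have "(\<Sum>j\<in>{1..M}. \<Sum>b\<in>A j. r j b * g j b)
      = (\<Sum>j\<in>{1..M}. if j = i then (\<Sum>b\<in>A i. r i b * g i b) else 0)"
    by (rule sum.cong) (auto simp: r_def)
  also have "\<dots> = g i a\<^sub>0 - (\<Sum>b\<in>A i. p i b * g i b)"
    using i \<open>finite (A i)\<close> a\<^sub>0 by (simp add: r_def left_diff_distrib sum_subtractf)
  finally have "0 < (\<Sum>j\<in>{1..M}. \<Sum>b\<in>A j. r j b * g j b)" using gain by simp
  then obtain d where "0 < d" and increase: "\<And>h. 0 < h \<Longrightarrow> h < d \<Longrightarrow> \<Phi> 0 < \<Phi> (0 + h)"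
    using DERIV_pos_inc_right[OF \<Phi>] by blast
  define h where "h = min (d / 2) (1 / 2)"
  have "0 < h" "h < d" "h < 1" using \<open>0 < d\<close> by (auto simp: h_def)
  then have "Fobj M K A e p < Fobj M K A e (\<lambda>j b. p j b + h * r j b)"
    using increase[of h] \<Phi>_F by simp
  moreover have "Fobj M K A e (\<lambda>j b. p j b + h * r j b) \<le> Fobj M K A e p"
    using F_max segment \<open>0 < h\<close> \<open>h < 1\<close> by simp
  ultimately show False by simp
qed

lemma continuous_on_coordinate: "continuous_on S (\<lambda>p :: nat \<Rightarrow> nat \<Rightarrow> real. p i a)"
  using continuous_on_product_then_coordinatewise[OF continuous_on_product_coordinates, of i a]
  by (rule continuous_on_subset) simp

lemma continuous_on_det_Vmat: "continuous_on S (\<lambda>p. det (Vmat M A e p a + C))"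
  by (rule continuous_on_det) (simp add: Vmat_def outer_def sum_component,
      intro continuous_intros continuous_on_coordinate)

lemma compact_stochastic_rows:
  "compact {p :: nat \<Rightarrow> nat \<Rightarrow> real. (\<forall>i a. p i a \<in> {0..1}) \<and> (\<forall>i\<in>I. sum (p i) (S i) = 1)}"
proof -
  have "compactin (product_topology (\<lambda>_. euclidean) UNIV) (PiE UNIV (\<lambda>_. PiE UNIV (\<lambda>_. {0..1::real})))"
    by (subst compactin_PiE)
      (auto simp: compactin_PiE euclidean_product_topology[symmetric] compact_Icc)
  then have "compact (PiE UNIV (\<lambda>_. PiE UNIV (\<lambda>_. {0..1::real})))"
    by (simp add: euclidean_product_topology)
  moreover have "closed (\<Inter>i\<in>I. {p :: nat \<Rightarrow> nat \<Rightarrow> real. sum (p i) (S i) = 1})"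
    by (intro closed_INT ballI closed_Collect_eq continuous_intros continuous_on_coordinate)
  ultimately have "compact (PiE UNIV (\<lambda>_. PiE UNIV (\<lambda>_. {0..1::real}))
      \<inter> (\<Inter>i\<in>I. {p. sum (p i) (S i) = 1}))"
    by (rule compact_Int_closed)
  also have "PiE UNIV (\<lambda>_. PiE UNIV (\<lambda>_. {0..1::real})) \<inter> (\<Inter>i\<in>I. {p. sum (p i) (S i) = 1})
      = {p. (\<forall>i a. p i a \<in> {0..1}) \<and> (\<forall>i\<in>I. sum (p i) (S i) = 1)}"
    by (auto simp: PiE_UNIV_domain Pi_iff)
  finally show ?thesis .
qed

lemma Fobj_eq_ln_prod_det:
  assumes P: "\<And>a. is_orth_proj (P a) (design_span M A e a)" and p: "p \<in> Cset M K A e"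
  shows "0 < (\<Prod>a\<in>{1..K}. det (Vmat M A e p a + mat 1 - P a))"
    and "Fobj M K A e p = ln (\<Prod>a\<in>{1..K}. det (Vmat M A e p a + mat 1 - P a))"
proof -
  have eq: "pdet (Vmat M A e p a) = det (Vmat M A e p a + mat 1 - P a)"
    and pos: "0 < pdet (Vmat M A e p a)" if "a \<in> {1..K}" for a
    using pdet_eq_det_add_orth_proj pdet_pos psd_with_range_Vmat[OF p that]
      subspace_design_span P by blast+
  have "0 < (\<Prod>a\<in>{1..K}. pdet (Vmat M A e p a))" using pos by (rule prod_pos)
  then show "0 < (\<Prod>a\<in>{1..K}. det (Vmat M A e p a + mat 1 - P a))" by (simp add: eq)
  have "Fobj M K A e p = ln (\<Prod>a\<in>{1..K}. pdet (Vmat M A e p a))"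
    unfolding Fobj_def by (rule ln_prod[symmetric]) (simp, metis pos order_less_irrefl)
  then show "Fobj M K A e p = ln (\<Prod>a\<in>{1..K}. det (Vmat M A e p a + mat 1 - P a))"
    by (simp add: eq)
qed

lemma rank_condition_if_det_add_orth_proj_nonzero:
  assumes P: "is_orth_proj P (design_span M A e a)" and det: "det (Vmat M A e p a + mat 1 - P) \<noteq> 0"
  shows "dim ((\<lambda>i. p i a *\<^sub>R e i a) ` Rset M A a) = dim ((\<lambda>i. e i a) ` Rset M A a)"
proof -
  have "design_span M A e a \<subseteq> span ((\<lambda>i. p i a *\<^sub>R e i a) ` Rset M A a)"
    by (rule subset_if_det_add_orth_proj_nonzero[OF subspace_design_span P det])
      (rule Vmat_in_span_scaled, rule span_scaled_subset_design_span)
  then have "span ((\<lambda>i. p i a *\<^sub>R e i a) ` Rset M A a) = span ((\<lambda>i. e i a) ` Rset M A a)"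
    using span_scaled_subset_design_span unfolding design_span_def by blast
  from arg_cong[OF this, of dim] show ?thesis by simp
qed

text \<open>On \<open>C\<close>, \<open>F\<close> is the logarithm of the continuous function \<open>\<Phi>\<close> below, which extends to the
  compact product of simplices; there \<open>\<Phi>\<close> vanishes wherever the rank condition fails, so a
  maximiser of \<open>\<Phi>\<close> lies in \<open>C\<close>.\<close>

lemma Fobj_attains_max:
  assumes A: "\<forall>i\<in>{1..M}. A i \<subseteq> {1..K}" and nonempty: "\<pi> \<in> Cset M K A e"
  obtains p where "p \<in> Cset M K A e" "\<forall>q\<in>Cset M K A e. Fobj M K A e q \<le> Fobj M K A e p"
proof -
  have "\<forall>a. \<exists>P. is_orth_proj P (design_span M A e a)"
    by (metis orth_proj_exists subspace_design_span)
  then obtain P where P: "\<And>a. is_orth_proj (P a) (design_span M A e a)" by metis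
  define \<Phi> where "\<Phi> p = (\<Prod>a\<in>{1..K}. det (Vmat M A e p a + mat 1 - P a))" for p
  define D where "D = {p :: nat \<Rightarrow> nat \<Rightarrow> real. (\<forall>i a. p i a \<in> {0..1}) \<and> (\<forall>i\<in>{1..M}. sum (p i) (A i) = 1)}"
  define trunc :: "(nat \<Rightarrow> nat \<Rightarrow> real) \<Rightarrow> nat \<Rightarrow> nat \<Rightarrow> real"
    where "trunc p i a = (if i \<in> {1..M} \<and> a \<in> A i then p i a else 0)" for p i a
  have \<Phi>_trunc: "\<Phi> (trunc p) = \<Phi> p" for p
    unfolding \<Phi>_def by (intro prod.cong refl arg_cong[of _ _ "\<lambda>X. det (X + _ - _)"] Vmat_cong)
      (simp add: trunc_def Rset_def)
  have trunc_D: "trunc p \<in> D" if p: "p \<in> Cset M K A e" for p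
  proof -
    have "p i a \<le> 1" if "i \<in> {1..M}" "a \<in> A i" for i a
      using Cset_rowD[OF A p that(1)] that(2) member_le_sum[of a "A i" "p i"] by auto
    then show ?thesis using Cset_rowD[OF A p] by (auto simp: D_def trunc_def)
  qed
  have "compact D" unfolding D_def by (rule compact_stochastic_rows)
  moreover have "continuous_on D \<Phi>"
    unfolding \<Phi>_def add_diff_eq[symmetric]
    by (intro continuous_on_prod ballI continuous_on_det_Vmat)
  moreover have "D \<noteq> {}" using trunc_D[OF nonempty] by blast
  ultimately obtain p where p: "p \<in> D" and p_max: "\<And>q. q \<in> D \<Longrightarrow> \<Phi> q \<le> \<Phi> p"
    using continuous_attains_sup by metis
  have "0 < \<Phi> p"
    using p_max[OF trunc_D[OF nonempty]] Fobj_eq_ln_prod_det(1)[OF P nonempty] \<Phi>_trunc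
    by (simp add: \<Phi>_def)
  have "det (Vmat M A e p a + mat 1 - P a) \<noteq> 0" if a: "a \<in> {1..K}" for a
  proof
    assume "det (Vmat M A e p a + mat 1 - P a) = 0"
    then have "\<Phi> p = 0" unfolding \<Phi>_def using a by (intro prod_zero) auto
    with \<open>0 < \<Phi> p\<close> show False by simp
  qed
  then have p_C: "p \<in> Cset M K A e"
    using p rank_condition_if_det_add_orth_proj_nonzero[OF P] by (auto simp: Cset_def D_def)
  moreover have "Fobj M K A e q \<le> Fobj M K A e p" if "q \<in> Cset M K A e" for q
    using p_max[OF trunc_D[OF that]] Fobj_eq_ln_prod_det[OF P that] Fobj_eq_ln_prod_det[OF P p_C]
      \<Phi>_trunc by (simp add: \<Phi>_def)
  ultimately show thesis using that by blast
qed

theorem lemma6: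
  fixes M K :: nat and A :: "nat \<Rightarrow> nat set" and e :: "nat \<Rightarrow> nat \<Rightarrow> real^'d"
    and \<pi>s :: "nat \<Rightarrow> nat \<Rightarrow> real"
  assumes "\<forall>i\<in>{1..M}. A i \<subseteq> {1..K}"
    and "\<forall>i\<in>{1..M}. \<forall>a\<in>A i. norm (e i a) = 1"
    and "\<pi>s \<in> Cset M K A e"
  shows "((\<forall>\<pi>\<in>Cset M K A e. Fobj M K A e \<pi> \<le> Fobj M K A e \<pi>s)
            \<longleftrightarrow> (\<forall>\<pi>\<in>Cset M K A e. Gobj M A e \<pi>s \<le> Gobj M A e \<pi>)) \<and>
         ((\<forall>\<pi>\<in>Cset M K A e. Gobj M A e \<pi>s \<le> Gobj M A e \<pi>)
            \<longleftrightarrow> Gobj M A e \<pi>s = real (\<Sum>a\<in>{1..K}. dval M A e a))"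
proof -
  note A = assms(1) and \<pi>s = assms(3)
  obtain p where p: "p \<in> Cset M K A e" and p_max: "\<forall>q\<in>Cset M K A e. Fobj M K A e q \<le> Fobj M K A e p"
    using Fobj_attains_max[OF A \<pi>s] by blast
  have G_p: "Gobj M A e p = real (\<Sum>a\<in>{1..K}. dval M A e a)"
    by (rule Gobj_eq_if_Fobj_max[OF A p p_max])
  have "(\<forall>\<pi>\<in>Cset M K A e. Fobj M K A e \<pi> \<le> Fobj M K A e \<pi>s)
      \<longleftrightarrow> Gobj M A e \<pi>s = real (\<Sum>a\<in>{1..K}. dval M A e a)"
    using Gobj_eq_if_Fobj_max[OF A \<pi>s] Fobj_max_if_Gobj_eq[OF A \<pi>s] by blast
  moreover have "(\<forall>\<pi>\<in>Cset M K A e. Gobj M A e \<pi>s \<le> Gobj M A e \<pi>)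
      \<longleftrightarrow> Gobj M A e \<pi>s = real (\<Sum>a\<in>{1..K}. dval M A e a)"
    using dval_sum_le_Gobj[OF A] \<pi>s p G_p by (metis order_antisym order_refl)
  ultimately show ?thesis by blast
qed

end
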